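(* Let $\mathbb{F}$ be a field and $\mathcal{A}$ a znz-pattern with $m\ge2$ nonzero diagonal entries, such that the digraph $D(\mathcal{A})$ has no $k$-cycles with $2\le k\le m-1$. If $\mathcal{A}$ is potentially nilpotent over $\mathbb{F}$, then $\mathbb{F}$ contains all the $m$-th roots of unity, i.e. $x^m-1$ factors into $m$ linear factors over $\mathbb{F}$.
   Context: A znz-pattern is an $n\times n$ matrix with entries in $\{*,0\}$; a realization over $\mathbb{F}$ is a matrix in $M_n(\mathbb{F})$ whose nonzero entries are exactly at the $*$ positions; $\mathcal{A}$ is potentially nilpotent over $\mathbb{F}$ if some realization is nilpotent. The digraph $D(\mathcal{A})$ has vertex set $\{1,\ldots,n\}$ and an arc $(i,j)$ whenever $\mathcal{A}_{i,j}=*$ (arcs $(i,i)$ are loops). A $k$-cycle is a sequence of $k$ distinct vertices $i_1,\ldots,i_k$ with arcs $(i_1,i_2),\ldots,(i_{k-1},i_k),(i_k,i_1)$. *)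

theory Defs
  imports "HOL-Analysis.Analysis" "HOL-Computational_Algebra.Polynomial"
begin

(* A znz-pattern on index type 'n: P i j = True iff entry (i,j) is *. *)
type_synonym 'n znz_pattern = "'n \<Rightarrow> 'n \<Rightarrow> bool"

primrec mat_power :: "'a::semiring_1 ^('n::finite)^'n \<Rightarrow> nat \<Rightarrow> 'a^'n^'n" where
  "mat_power A 0 = mat 1"
| "mat_power A (Suc k) = A ** mat_power A k"

definition nilpotent_mat :: "'a::semiring_1 ^('n::finite)^'n \<Rightarrow> bool" where
  "nilpotent_mat A \<longleftrightarrow> (\<exists>k. mat_power A k = 0)"

definition realization :: "('n::finite) znz_pattern \<Rightarrow> 'a::zero ^'n^'n \<Rightarrow> bool" where
  "realization P A \<longleftrightarrow> (\<forall>i j. A $ i $ j \<noteq> 0 \<longleftrightarrow> P i j)"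

definition potentially_nilpotent :: "('n::finite) znz_pattern \<Rightarrow> ('a::field) itself \<Rightarrow> bool" where
  "potentially_nilpotent P (_ :: 'a itself) \<longleftrightarrow>
     (\<exists>A :: 'a^'n^'n. realization P A \<and> nilpotent_mat A)"

definition has_cycle :: "'n znz_pattern \<Rightarrow> nat \<Rightarrow> bool" where
  "has_cycle P k \<longleftrightarrow> (\<exists>v :: nat \<Rightarrow> 'n. inj_on v {..<k} \<and>
       (\<forall>i<k. P (v i) (v (Suc i mod k))))"

definition num_diag :: "('n::finite) znz_pattern \<Rightarrow> nat" where
  "num_diag P = card {i. P i i}"

end

theory Submission
  imports Defs "HOL-Combinatorics.Orbits"
begin

(*
  Let A be a nilpotent realization of the pattern P and put B = I - X A, a matrix over
  the polynomial ring F[X]. The proof compares two descriptions of det B.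

  (1) Since A is nilpotent, B is invertible over F[X] (geometric series), so det B is a
      unit, i.e. a constant; evaluating at X = 0 shows det B = 1.
  (2) In the Leibniz expansion of det B, a non-identity permutation contributes a
      nonzero term only if each of its cycles is a cycle of the digraph of A. Such a
      cycle has length at least m (there are no k-cycles with 2 \<le> k \<le> m - 1), and every
      moved point contributes a factor X. Hence det B \<equiv> \<Prod>i (1 - d_i X) (mod X^m),
      where d_i = A_ii; exactly m of the d_i are nonzero.

  Comparing, \<Prod>{d_i \<noteq> 0} (1 - d_i X) = 1 - c X^m. Evaluating at 1/d_0 gives c = d_0^m;
  rescaling X and passing to reversed factors shows X^m - 1 = \<Prod>(X - d_0/d_i).
*)

text \<open>The orbit of a moved point of a permutation is a cycle (of length at least 2) of
  every digraph containing all arcs i \<rightarrow> \<sigma> i at moved points i; the cycle consists of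
  moved points only.\<close>

lemma permutation_orbit_cycle:
  fixes \<sigma> :: "'a \<Rightarrow> 'a"
  assumes perm: "permutation \<sigma>" and moved: "\<sigma> x \<noteq> x"
    and arcs: "\<And>i. \<sigma> i \<noteq> i \<Longrightarrow> Q i (\<sigma> i)"
  shows "\<exists>L. 2 \<le> L \<and> L \<le> card {i. \<sigma> i \<noteq> i} \<and> has_cycle Q L"
proof -
  define L where "L = funpow_dist1 \<sigma> x x"
  define v where "v n = (\<sigma> ^^ n) x" for n
  have x_orbit: "x \<in> orbit \<sigma> x" using perm by (rule permutation_self_in_orbit)
  have period: "(\<sigma> ^^ L) x = x" unfolding L_def using x_orbit by (rule funpow_dist1_prop)
  have inj_v: "inj_on v {..<L}"
    using inj_on_funpow_dist1[OF x_orbit] unfolding v_def L_def by (simp add: atLeast0LessThan)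
  have inj_\<sigma>: "inj \<sigma>" using perm by (rule permutation_bijective[THEN bij_is_inj])
  have v_moved: "\<sigma> (v n) \<noteq> v n" for n
  proof
    assume "\<sigma> (v n) = v n"
    hence "(\<sigma> ^^ n) (\<sigma> x) = (\<sigma> ^^ n) x" unfolding v_def by (simp add: funpow_swap1)
    hence "\<sigma> x = x" using inj_fn[OF inj_\<sigma>] by (auto dest: injD)
    with moved show False ..
  qed
  have v_step: "v (Suc n mod L) = \<sigma> (v n)" if "n < L" for n
  proof (cases "Suc n < L")
    case True thus ?thesis by (simp add: v_def)
  next
    case False
    with that have "Suc n = L" by simp
    thus ?thesis using period by (auto simp: v_def)
  qed
  have "L \<noteq> 1" using period moved by auto
  hence "2 \<le> L" unfolding L_def by simp
  moreover have "has_cycle Q L"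
    unfolding has_cycle_def using inj_v v_step arcs v_moved by (intro exI[of _ v]) auto
  moreover have "L \<le> card {i. \<sigma> i \<noteq> i}"
  proof -
    have "finite {i. \<sigma> i \<noteq> i}" using perm by (simp add: permutation)
    hence "card (v ` {..<L}) \<le> card {i. \<sigma> i \<noteq> i}" by (rule card_mono) (use v_moved in auto)
    thus ?thesis using inj_v by (simp add: card_image)
  qed
  ultimately show ?thesis by blast
qed

definition X_mat :: "'a::comm_semiring_1^'n::finite^'n \<Rightarrow> 'a poly^'n^'n" where
  "X_mat A = (\<chi> i j. monom (A $ i $ j) 1)"

lemma mat_power_X_mat: "mat_power (X_mat A) k = (\<chi> i j. monom (mat_power A k $ i $ j) k)"
proof (induction k)
  case 0 thus ?case by (simp add: mat_def vec_eq_iff)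
next
  case (Suc k)
  show ?case
    by (simp only: mat_power.simps Suc.IH)
       (simp add: X_mat_def matrix_matrix_mult_def vec_eq_iff mult_monom monom_sum)
qed

lemma geometric_matrix_sum:
  fixes M :: "'a::comm_ring_1^'n::finite^'n"
  shows "(mat 1 - M) ** (\<Sum>j<k. mat_power M j) = mat 1 - mat_power M k"
proof (induction k)
  case 0 thus ?case by simp
next
  case (Suc k)
  have distrib: "(mat 1 - M) ** C = C - M ** C" for C :: "'a^'n^'n"
  proof -
    have "(mat 1 - M) ** C = mat 1 ** C - M ** C"
      by (simp add: matrix_matrix_mult_def vec_eq_iff sum_subtractf left_diff_distrib)
    thus ?thesis by (simp add: matrix_mul_lid)
  qed
  show ?case
    using Suc by (simp add: matrix_add_ldistrib distrib)
qed

lemma poly_det: "poly (det M) x = det (\<chi> i j. poly (M $ i $ j) x)"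
  unfolding det_def by (simp add: poly_sum poly_prod)

text \<open>For nilpotent A, the matrix I - X A is invertible over F[X] and its determinant
  (a unit with value 1 at X = 0) is exactly 1.\<close>

lemma det_one_minus_X_mat_nilpotent:
  fixes A :: "'a::field^'n::finite^'n"
  assumes "nilpotent_mat A"
  shows "det (mat 1 - X_mat A) = 1"
proof -
  obtain k where "mat_power A k = 0" using assms nilpotent_mat_def by blast
  hence "mat_power (X_mat A) k = 0" by (simp add: mat_power_X_mat vec_eq_iff)
  hence "(mat 1 - X_mat A) ** (\<Sum>j<k. mat_power (X_mat A) j) = mat 1"
    by (simp add: geometric_matrix_sum)
  hence "det (mat 1 - X_mat A) * det (\<Sum>j<k. mat_power (X_mat A) j) = 1"
    by (metis det_mul det_I)
  hence "is_unit (det (mat 1 - X_mat A))" by (metis dvdI)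
  then obtain c where c: "det (mat 1 - X_mat A) = [:c:]" by (auto simp: is_unit_poly_iff)
  have "(\<chi> i j. poly ((mat 1 - X_mat A) $ i $ j) 0) = (mat 1 :: 'a^'n^'n)"
    by (simp add: X_mat_def mat_def vec_eq_iff poly_monom)
  hence "poly (det (mat 1 - X_mat A)) 0 = 1" by (simp add: poly_det)
  thus ?thesis using c by (simp add: one_pCons)
qed

lemma one_minus_X_mat_entry:
  fixes A :: "'a::comm_ring_1^'n::finite^'n"
  shows "(mat 1 - X_mat A) $ i $ j = (if i = j then [:1, - A $ i $ i:] else [:0, - A $ i $ j:])"
  by (simp add: X_mat_def mat_def monom_Suc monom_0 one_pCons minus_pCons)

text \<open>A non-identity permutation contributes to the Leibniz expansion of det (I - X A) a
  term divisible by X^m when the digraph of A has no k-cycles for 2 \<le> k \<le> m - 1: either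
  the term vanishes, or the orbit of a moved point is a cycle of that digraph, so at
  least m points are moved, each contributing a factor X.\<close>

lemma permutation_term_divisible:
  fixes A :: "'a::comm_ring_1^'n::finite^'n"
  assumes no_short: "\<forall>k. 2 \<le> k \<and> k \<le> m - 1 \<longrightarrow> \<not> has_cycle (\<lambda>i j. A $ i $ j \<noteq> 0) k"
    and perm: "\<sigma> permutes UNIV" and nontrivial: "\<sigma> \<noteq> id"
  shows "[:0,1:] ^ m dvd (\<Prod>i\<in>UNIV. (mat 1 - X_mat A) $ i $ \<sigma> i)"
proof (cases "\<exists>i. \<sigma> i \<noteq> i \<and> A $ i $ \<sigma> i = 0")
  case True
  then obtain i where "\<sigma> i \<noteq> i" "A $ i $ \<sigma> i = 0" by blast
  hence "(mat 1 - X_mat A) $ i $ \<sigma> i = 0" by (simp only: one_minus_X_mat_entry) simp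
  hence "(\<Prod>i\<in>UNIV. (mat 1 - X_mat A) $ i $ \<sigma> i) = 0" by (intro prod_zero) auto
  thus ?thesis by (metis dvd_0_right)
next
  case False
  let ?moved = "{i. \<sigma> i \<noteq> i}"
  obtain x where "\<sigma> x \<noteq> x" using nontrivial by (auto simp: fun_eq_iff)
  moreover have "permutation \<sigma>" using perm by (simp add: permutes_imp_permutation)
  ultimately obtain L where "2 \<le> L" "L \<le> card ?moved" "has_cycle (\<lambda>i j. A $ i $ j \<noteq> 0) L"
    using permutation_orbit_cycle[of \<sigma> x "\<lambda>i j. A $ i $ j \<noteq> 0"] False by blast
  with no_short have "m \<le> card ?moved" by fastforce
  hence "[:0,1:] ^ m dvd [:0,1::'a:] ^ card ?moved" by (rule le_imp_power_dvd)
  also have "\<dots> = (\<Prod>i\<in>?moved. [:0,1:])" by simp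
  also have "\<dots> dvd (\<Prod>i\<in>?moved. (mat 1 - X_mat A) $ i $ \<sigma> i)"
  proof (rule prod_dvd_prod)
    fix i assume "i \<in> ?moved"
    hence "(mat 1 - X_mat A) $ i $ \<sigma> i = [:0,1:] * [:- A $ i $ \<sigma> i:]"
      by (simp only: one_minus_X_mat_entry) simp
    thus "[:0,1:] dvd (mat 1 - X_mat A) $ i $ \<sigma> i" by (metis dvd_triv_left)
  qed
  also have "\<dots> dvd (\<Prod>i\<in>UNIV. (mat 1 - X_mat A) $ i $ \<sigma> i)"
    by (rule prod_dvd_prod_subset) auto
  finally show ?thesis .
qed

lemma det_congruent_diagonal:
  fixes A :: "'a::comm_ring_1^'n::finite^'n"
  assumes "\<forall>k. 2 \<le> k \<and> k \<le> m - 1 \<longrightarrow> \<not> has_cycle (\<lambda>i j. A $ i $ j \<noteq> 0) k"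
  shows "[:0,1:] ^ m dvd det (mat 1 - X_mat A) - (\<Prod>i\<in>UNIV. [:1, - A $ i $ i:])"
proof -
  let ?B = "mat 1 - X_mat A"
  let ?term = "\<lambda>p. of_int (sign p) * (\<Prod>i\<in>UNIV. ?B $ i $ p i)"
  have "det ?B = ?term id + sum ?term ({p. p permutes UNIV} - {id})"
    unfolding det_def by (subst sum.remove[of _ id]) (auto simp: finite_permutations permutes_id)
  moreover have "?term id = (\<Prod>i\<in>UNIV. [:1, - A $ i $ i:])"
    by (simp only: one_minus_X_mat_entry) simp
  ultimately have "det ?B - (\<Prod>i\<in>UNIV. [:1, - A $ i $ i:])
      = sum ?term ({p. p permutes UNIV} - {id})"
    by simp
  also have "[:0,1:] ^ m dvd \<dots>"
    by (rule dvd_sum) (use permutation_term_divisible[OF assms] in auto)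
  finally show ?thesis .
qed

lemma congruent_one_low_degree:
  fixes g :: "'a::field poly"
  assumes dvd: "[:0,1:] ^ m dvd 1 - g" and deg: "degree g \<le> m"
  shows "\<exists>c. g = 1 - smult c ([:0,1:] ^ m)"
proof -
  obtain q where q: "1 - g = [:0,1:] ^ m * q" using dvd by (elim dvdE)
  have "degree q = 0"
  proof (cases "q = 0")
    case False
    have "degree (1 - g) \<le> m" using deg by (metis degree_diff_le degree_1 le0)
    hence "m + degree q \<le> m" unfolding q using False
      by (simp add: degree_mult_eq degree_linear_power)
    thus ?thesis by simp
  qed simp
  then obtain c where "q = [:c:]" by (metis degree_0_id)
  with q have "g = 1 - smult c ([:0,1:] ^ m)" by (simp add: algebra_simps)
  thus ?thesis ..
qed

lemma degree_prod_linear_le: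
  "degree (\<Prod>i\<in>L. [:1, - d i:] :: 'a::field poly) \<le> card L"
proof (cases "finite L")
  case True
  have "degree (\<Prod>i\<in>L. [:1, - d i:]) \<le> (\<Sum>i\<in>L. degree [:1, - d i:])"
    using degree_prod_sum_le[OF True, of "\<lambda>i. [:1, - d i:]"] by (simp only: comp_def)
  also have "\<dots> \<le> (\<Sum>i\<in>L. 1)" by (intro sum_mono) simp
  finally show ?thesis by simp
qed simp

lemma pcompose_power: "pcompose (p ^ n) q = pcompose p q ^ n"
  by (induction n) (simp_all add: pcompose_mult pcompose_1)

text \<open>If 1 - X^m splits into m linear factors 1 - e_i X, then X^m - 1 splits into the
  reversed factors X - 1/e_i: the product of the reversed factors is a constant multiple
  of 1 - X^m, and being monic, that constant is -1.\<close>

lemma reversed_factorization: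
  fixes e :: "'i \<Rightarrow> 'a::field"
  assumes split: "(\<Prod>i\<in>L. [:1, - e i:]) = 1 - [:0,1:] ^ m"
    and card: "card L = m" and "m \<ge> 1" and nonzero: "\<forall>i\<in>L. e i \<noteq> 0"
  shows "(\<Prod>i\<in>L. [:- inverse (e i), 1:]) = monom 1 m - 1"
proof -
  define K where "K = (\<Prod>i\<in>L. - inverse (e i))"
  have factor: "[:- inverse (e i), 1:] = [:- inverse (e i):] * [:1, - e i:]" if "i \<in> L" for i
    using that nonzero by simp
  have reversed: "(\<Prod>i\<in>L. [:- inverse (e i), 1:]) = [:K:] * (1 - [:0,1:] ^ m)"
    unfolding K_def prod_to_poly[symmetric] split[symmetric] prod.distrib[symmetric]
    by (rule prod.cong) (use factor in auto)
  have "degree (\<Prod>i\<in>L. [:- inverse (e i), 1:]) = m"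
    by (subst degree_prod_sum_eq) (auto simp: card)
  moreover have "lead_coeff (\<Prod>i\<in>L. [:- inverse (e i), 1:]) = 1"
    by (simp add: lead_coeff_prod)
  ultimately have "coeff ([:K:] * (1 - [:0,1:] ^ m)) m = 1" unfolding reversed by simp
  hence "- K = 1" using \<open>m \<ge> 1\<close> by (simp add: monom_altdef[of 1, simplified, symmetric])
  hence "K = -1" by (metis minus_minus)
  thus ?thesis unfolding reversed by (simp add: monom_altdef)
qed

text \<open>If \<Prod>(1 - d_i X) = 1 - c X^m over m indices with nonzero d_i, then for every fixed
  index i0 the quotients d_i0 / d_i are the m roots of X^m - 1: evaluating at X = 1/d_i0
  gives c = d_i0^m, and the substitution X \<mapsto> X/d_i0 reduces to the previous lemma.\<close>

lemma roots_of_unity_from_factorization: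
  fixes d :: "'i \<Rightarrow> 'a::field"
  assumes split: "(\<Prod>i\<in>L. [:1, - d i:]) = 1 - smult c ([:0,1:] ^ m)"
    and card: "card L = m" and "m \<ge> 1" and nonzero: "\<forall>i\<in>L. d i \<noteq> 0" and "i0 \<in> L"
  shows "(\<Prod>i\<in>L. [:- (d i0 / d i), 1:]) = monom 1 m - 1"
proof -
  define d0 where "d0 = d i0"
  have "d0 \<noteq> 0" using nonzero \<open>i0 \<in> L\<close> by (simp add: d0_def)
  have "finite L" using card \<open>m \<ge> 1\<close> by (metis card.infinite not_one_le_zero)
  have "poly (\<Prod>i\<in>L. [:1, - d i:]) (1 / d0) = 0"
    unfolding poly_prod using \<open>finite L\<close> \<open>i0 \<in> L\<close> \<open>d0 \<noteq> 0\<close>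
    by (intro prod_zero) (auto intro!: bexI[of _ i0] simp: d0_def)
  hence c: "c * (1 / d0) ^ m = 1" unfolding split by simp
  have "(\<Prod>i\<in>L. [:1, - (d i / d0):]) = pcompose (\<Prod>i\<in>L. [:1, - d i:]) [:0, 1 / d0:]"
    by (simp add: pcompose_prod pcompose_pCons)
  also have "\<dots> = 1 - smult c ([:0, 1 / d0:] ^ m)"
    unfolding split by (simp add: pcompose_diff pcompose_smult pcompose_power pcompose_pCons
        pcompose_1)
  also have "\<dots> = 1 - [:0,1:] ^ m"
    using smult_power[of "1 / d0" "[:0,1:]" m] c by simp
  finally have "(\<Prod>i\<in>L. [:1, - (d i / d0):]) = 1 - [:0,1:] ^ m" .
  hence "(\<Prod>i\<in>L. [:- inverse (d i / d0), 1:]) = monom 1 m - 1"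
    by (rule reversed_factorization) (use card \<open>m \<ge> 1\<close> nonzero \<open>d0 \<noteq> 0\<close> in auto)
  thus ?thesis by (simp add: d0_def)
qed

lemma linear_factors_as_list:
  fixes r :: "'i \<Rightarrow> 'a::comm_ring_1"
  assumes "finite L"
  shows "\<exists>rs. length rs = card L \<and> (\<Prod>i\<in>L. [:- r i, 1:]) = (\<Prod>x\<leftarrow>rs. [:- x, 1:])"
proof -
  obtain xs where xs: "distinct xs" "set xs = L" using finite_distinct_list[OF assms] by auto
  hence "length (map r xs) = card L" by (metis distinct_card length_map)
  moreover have "(\<Prod>i\<in>L. [:- r i, 1:]) = (\<Prod>x\<leftarrow>map r xs. [:- x, 1:])"
    using xs prod.distinct_set_conv_list[of xs "\<lambda>i. [:- r i, 1:]"] by (simp add: comp_def)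
  ultimately show ?thesis by blast
qed

theorem theorem4p4:
  fixes P :: "('n::finite) znz_pattern" and m :: nat
  assumes "num_diag P = m" and "m \<ge> 2"
    and "\<forall>k. 2 \<le> k \<and> k \<le> m - 1 \<longrightarrow> \<not> has_cycle P k"
    and "potentially_nilpotent P TYPE('a::field)"
  shows "\<exists>rs :: 'a list. length rs = m \<and>
           (monom 1 m - 1 :: 'a poly) = (\<Prod>r\<leftarrow>rs. [:- r, 1:])"
proof -
  obtain A :: "'a^'n^'n" where real: "realization P A" and nil: "nilpotent_mat A"
    using assms(4) unfolding potentially_nilpotent_def by blast
  have digraph: "P = (\<lambda>i j. A $ i $ j \<noteq> 0)" using real unfolding realization_def by blast
  define L where "L = {i. A $ i $ i \<noteq> 0}"
  define g where "g = (\<Prod>i\<in>L. [:1, - A $ i $ i:])"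
  have card: "card L = m" using assms(1) unfolding num_diag_def digraph L_def .
  have "(\<Prod>i\<in>UNIV. [:1, - A $ i $ i:]) = g"
    unfolding g_def by (rule prod.mono_neutral_right) (auto simp: L_def one_pCons)
  hence "[:0,1:] ^ m dvd 1 - g"
    using det_congruent_diagonal[OF assms(3)[unfolded digraph]]
    unfolding det_one_minus_X_mat_nilpotent[OF nil] by simp
  moreover have "degree g \<le> m" unfolding g_def card[symmetric] by (rule degree_prod_linear_le)
  ultimately obtain c where split: "g = 1 - smult c ([:0,1:] ^ m)"
    using congruent_one_low_degree by blast
  have "L \<noteq> {}" using card assms(2) by auto
  then obtain i0 where "i0 \<in> L" by blast
  have roots: "(\<Prod>i\<in>L. [:- (A $ i0 $ i0 / A $ i $ i), 1:]) = monom 1 m - 1"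
    by (rule roots_of_unity_from_factorization[OF split[unfolded g_def] card _ _ \<open>i0 \<in> L\<close>])
       (use assms(2) in \<open>auto simp: L_def\<close>)
  thus ?thesis using linear_factors_as_list[of L "\<lambda>i. A $ i0 $ i0 / A $ i $ i"] card by simp
qed

end
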